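(* Let $X_n=\{0,1\}^n\setminus\{0^n\}$ and let $\mathcal{C}_n$ be the class of negative parity functions over $X_n$, i.e. $\lnot\oplus_s:X_n\to\{0,1\}$, $\lnot\oplus_s(x)=1-(s\cdot x\bmod 2)$, for $s\in\{0,1\}^n$. For any query function $g:\{0,1\}^n\to\{-1,+1\}$, there are at most $2^{n/2+2}$ predicates in $\mathcal{C}_n$ that are not $2^{-n/4}$-independent from $g$.
   Context: For $f\in\mathcal{C}_n$ let $S_f=\{x\in X_n: f(x)=1\}$. A predicate $f$ is $\xi$-independent from $g$ if $\left|\mathbf{E}_{x\in S_f}[g(x)]-\mathbf{E}_{x\in\{0,1\}^n}[g(x)]\right|\le\xi$, expectations over the uniform distribution on the indicated sets. *)

theory Defs
  imports Complex_Main "HOL-Library.FuncSet"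
begin

definition cube :: "nat \<Rightarrow> bool list set" where
  "cube n = {x. length x = n}"

definition Xn :: "nat \<Rightarrow> bool list set" where
  "Xn n = cube n - {replicate n False}"

definition dotmod2 :: "nat \<Rightarrow> bool list \<Rightarrow> bool list \<Rightarrow> nat" where
  "dotmod2 n s x = (\<Sum>i<n. if s ! i \<and> x ! i then 1 else 0) mod 2"

definition negpar :: "nat \<Rightarrow> bool list \<Rightarrow> (bool list \<Rightarrow> real)" where
  "negpar n s = (\<lambda>x\<in>Xn n. 1 - real (dotmod2 n s x))"

definition Cn :: "nat \<Rightarrow> (bool list \<Rightarrow> real) set" where
  "Cn n = negpar n ` cube n"

definition Sf :: "nat \<Rightarrow> (bool list \<Rightarrow> real) \<Rightarrow> bool list set" where
  "Sf n f = {x \<in> Xn n. f x = 1}"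

text \<open>Expectation under the uniform distribution on a finite set (0 on the empty set).\<close>
definition avg :: "bool list set \<Rightarrow> (bool list \<Rightarrow> real) \<Rightarrow> real" where
  "avg A g = (\<Sum>x\<in>A. g x) / real (card A)"

definition xi_independent ::
  "nat \<Rightarrow> real \<Rightarrow> (bool list \<Rightarrow> real) \<Rightarrow> (bool list \<Rightarrow> real) \<Rightarrow> bool" where
  "xi_independent n \<xi> f g \<longleftrightarrow> \<bar>avg (Sf n f) g - avg (cube n) g\<bar> \<le> \<xi>"

end

theory Submission
  imports Defs
begin

(*
  Let \<chi>\<^sub>s(x) = (-1)^(s \<cdot> x) and let c\<^sub>s = \<Sum>\<^sub>x g(x) \<chi>\<^sub>s(x) be the Fourier coefficients of g.
  For s \<noteq> 0 the set S_f of f = \<not>\<oplus>\<^sub>s is the hyperplane {x. s \<cdot> x = 0} without 0; it has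
  2^(n-1) - 1 elements and the sum of g over it is (\<Sum>\<^sub>x g(x) + c\<^sub>s)/2 - g(0). Hence if f is
  not \<xi>-independent from g, then |c\<^sub>s| > \<xi> (2^n - 2) - 4, which for \<xi> = 2^(-n/4) is about
  2^(3n/4). By Parseval \<Sum>\<^sub>s c\<^sub>s^2 = 2^n \<Sum>\<^sub>x g(x)^2 = 4^n, so at most about 2^(n/2) of the
  coefficients can be that large; s = 0 is counted separately.
*)

lemma finite_cube [simp]: "finite (cube n)"
  using finite_lists_length_eq[of "UNIV :: bool set" n] by (simp add: cube_def)

lemma card_cube: "card (cube n) = 2 ^ n"
  using card_lists_length_eq[of "UNIV :: bool set" n] by (simp add: cube_def)

lemma replicate_False_in_cube [simp]: "replicate n False \<in> cube n"
  by (simp add: cube_def)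

lemma cube_Suc: "cube (Suc n) = (\<lambda>(b, s). b # s) ` (UNIV \<times> cube n)"
  by (auto simp: cube_def image_iff length_Suc_conv)

lemma sum_cube_prod_nth:
  fixes f :: "nat \<Rightarrow> bool \<Rightarrow> 'a :: comm_semiring_1"
  shows "(\<Sum>s\<in>cube n. \<Prod>i<n. f i (s ! i)) = (\<Prod>i<n. f i True + f i False)"
proof (induction n arbitrary: f)
  case 0
  have "cube 0 = {[]}" by (auto simp: cube_def)
  then show ?case by simp
next
  case (Suc n)
  have inj: "inj_on (\<lambda>(b, s). b # s) (UNIV \<times> cube n)"
    by (auto simp: inj_on_def)
  have "(\<Sum>s\<in>cube (Suc n). \<Prod>i<Suc n. f i (s ! i))
      = (\<Sum>b\<in>UNIV. \<Sum>s\<in>cube n. f 0 b * (\<Prod>i<n. f (Suc i) (s ! i)))"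
    unfolding cube_Suc sum.reindex[OF inj] sum.cartesian_product
    by (simp add: prod.lessThan_Suc_shift case_prod_unfold del: prod.lessThan_Suc)
  also have "\<dots> = (f 0 True + f 0 False) * (\<Prod>i<n. f (Suc i) True + f (Suc i) False)"
    using Suc[of "\<lambda>i. f (Suc i)"] by (simp add: UNIV_bool sum_distrib_left[symmetric] algebra_simps)
  also have "\<dots> = (\<Prod>i<Suc n. f i True + f i False)"
    by (simp add: prod.lessThan_Suc_shift del: prod.lessThan_Suc)
  finally show ?case .
qed

definition parity_char :: "nat \<Rightarrow> bool list \<Rightarrow> bool list \<Rightarrow> real" where
  "parity_char n s x = (\<Prod>i<n. if s ! i \<and> x ! i then -1 else 1)"

lemma parity_char_commute: "parity_char n s x = parity_char n x s"
  unfolding parity_char_def by (simp add: conj_commute)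

lemma parity_char_dotmod2: "parity_char n s x = (if dotmod2 n s x = 0 then 1 else -1)"
proof -
  have "parity_char n s x = (-1) ^ (\<Sum>i<n. if s ! i \<and> x ! i then 1 else 0)"
    unfolding parity_char_def power_sum by (rule prod.cong) auto
  then show ?thesis
    by (simp add: dotmod2_def minus_one_power_iff even_iff_mod_2_eq_zero)
qed

lemma parity_char_replicate_False: "parity_char n s (replicate n False) = 1"
  unfolding parity_char_def by (rule prod.neutral) auto

lemma sum_parity_char_mult:
  assumes "x \<in> cube n" "y \<in> cube n"
  shows "(\<Sum>s\<in>cube n. parity_char n s x * parity_char n s y) = (if x = y then 2 ^ n else 0)"
proof -
  have "(\<Sum>s\<in>cube n. parity_char n s x * parity_char n s y)
      = (\<Prod>i<n. (if x ! i then -1 else 1) * (if y ! i then -1 else 1) + 1)"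
    unfolding parity_char_def prod.distrib[symmetric]
    using sum_cube_prod_nth[of "\<lambda>i b. (if b \<and> x ! i then -1 else 1) * (if b \<and> y ! i then -1 else (1::real))"]
    by simp
  also have "\<dots> = (\<Prod>i<n. if x ! i = y ! i then 2 else 0)"
    by (rule prod.cong) auto
  also have "\<dots> = (if x = y then 2 ^ n else 0)"
  proof (cases "x = y")
    case False
    have "length x = n" "length y = n" using assms by (simp_all add: cube_def)
    with False obtain i where "i < n" "x ! i \<noteq> y ! i"
      using nth_equalityI by force
    then have "(\<Prod>i<n. if x ! i = y ! i then 2 else 0) = (0::real)"
      by (intro prod_zero) auto
    with False show ?thesis by simp
  qed simp
  finally show ?thesis .
qed

definition fourier_coeff :: "nat \<Rightarrow> (bool list \<Rightarrow> real) \<Rightarrow> bool list \<Rightarrow> real" where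
  "fourier_coeff n g s = (\<Sum>x\<in>cube n. g x * parity_char n s x)"

lemma parseval:
  "(\<Sum>s\<in>cube n. (fourier_coeff n g s)\<^sup>2) = 2 ^ n * (\<Sum>x\<in>cube n. (g x)\<^sup>2)"
proof -
  let ?F = "\<lambda>s x y. g x * g y * (parity_char n s x * parity_char n s y)"
  have "(fourier_coeff n g s)\<^sup>2 = (\<Sum>x\<in>cube n. \<Sum>y\<in>cube n. ?F s x y)" for s
    unfolding fourier_coeff_def power2_eq_square sum_product by (simp only: mult_ac)
  then have "(\<Sum>s\<in>cube n. (fourier_coeff n g s)\<^sup>2) = (\<Sum>s\<in>cube n. \<Sum>x\<in>cube n. \<Sum>y\<in>cube n. ?F s x y)"
    by simp
  also have "\<dots> = (\<Sum>x\<in>cube n. \<Sum>y\<in>cube n. \<Sum>s\<in>cube n. ?F s x y)"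
    by (subst sum.swap) (rule sum.cong[OF refl sum.swap])
  also have "\<dots> = (\<Sum>x\<in>cube n. \<Sum>y\<in>cube n. if x = y then 2 ^ n * (g x)\<^sup>2 else 0)"
    by (intro sum.cong refl) (simp add: sum_distrib_left[symmetric] sum_parity_char_mult power2_eq_square)
  also have "\<dots> = 2 ^ n * (\<Sum>x\<in>cube n. (g x)\<^sup>2)"
    by (simp add: sum_distrib_left)
  finally show ?thesis .
qed

lemma sum_dotmod2_eq_0:
  "(\<Sum>x\<in>{x \<in> cube n. dotmod2 n s x = 0}. g x) = ((\<Sum>x\<in>cube n. g x) + fourier_coeff n g s) / 2"
proof -
  have "(\<Sum>x\<in>{x \<in> cube n. dotmod2 n s x = 0}. g x) = (\<Sum>x\<in>cube n. if dotmod2 n s x = 0 then g x else 0)"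
    by (simp add: sum.inter_filter)
  also have "\<dots> = (\<Sum>x\<in>cube n. (g x + g x * parity_char n s x) / 2)"
    by (intro sum.cong refl) (simp add: parity_char_dotmod2)
  finally show ?thesis
    by (simp add: fourier_coeff_def sum_divide_distrib[symmetric] sum.distrib)
qed

lemma dotmod2_replicate_False: "dotmod2 n s (replicate n False) = 0"
  using parity_char_replicate_False[of n s] by (simp add: parity_char_dotmod2 split: if_splits)

lemma card_dotmod2_eq_0:
  assumes "s \<in> cube n" "s \<noteq> replicate n False"
  shows "real (card {x \<in> cube n. dotmod2 n s x = 0}) = 2 ^ n / 2"
proof -
  have "fourier_coeff n (\<lambda>_. 1) s = (\<Sum>x\<in>cube n. parity_char n x s * parity_char n x (replicate n False))"
    by (simp add: fourier_coeff_def parity_char_commute parity_char_replicate_False)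
  also have "\<dots> = 0"
    using assms by (simp add: sum_parity_char_mult)
  finally show ?thesis
    using sum_dotmod2_eq_0[where g = "\<lambda>_. 1"] by (simp add: card_cube)
qed

lemma Sf_negpar:
  "Sf n (negpar n s) = {x \<in> cube n. dotmod2 n s x = 0} - {replicate n False}"
  by (auto simp: Sf_def negpar_def Xn_def)

lemma avg_Sf_negpar:
  assumes "s \<in> cube n" "s \<noteq> replicate n False"
  shows "avg (Sf n (negpar n s)) g
    = ((\<Sum>x\<in>cube n. g x) + fourier_coeff n g s - 2 * g (replicate n False)) / (2 ^ n - 2)"
proof -
  define A where "A = {x \<in> cube n. dotmod2 n s x = 0}"
  have zero_in_A: "replicate n False \<in> A" and "finite A"
    by (simp_all add: A_def dotmod2_replicate_False)
  then have sum_Sf: "(\<Sum>x\<in>Sf n (negpar n s). g x)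
      = ((\<Sum>x\<in>cube n. g x) + fourier_coeff n g s - 2 * g (replicate n False)) / 2"
    using sum_dotmod2_eq_0[of g n s] by (simp add: Sf_negpar sum_diff1 A_def[symmetric])
  have "card A \<noteq> 0"
    using zero_in_A \<open>finite A\<close> by auto
  then have card_Sf: "real (card (Sf n (negpar n s))) = (2 ^ n - 2) / 2"
    using zero_in_A card_dotmod2_eq_0[OF assms] by (simp add: Sf_negpar A_def[symmetric] of_nat_diff)
  show ?thesis
    unfolding avg_def sum_Sf card_Sf
    by (simp only: divide_divide_times_eq mult.commute[of _ 2] mult_divide_mult_cancel_left_if) simp
qed

lemma deviation_bound:
  fixes N M D Z :: real
  assumes "2 < N" "\<bar>M\<bar> \<le> N" "\<bar>Z\<bar> \<le> 1"
  shows "\<bar>(M + D - 2 * Z) / (N - 2) - M / N\<bar> * (N - 2) \<le> \<bar>D\<bar> + 4"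
proof -
  have "N \<noteq> 0" "N - 2 \<noteq> 0"
    using assms(1) by auto
  then have expand: "((M + D - 2 * Z) / (N - 2) - M / N) * (N - 2) = D - 2 * Z + 2 * (M / N)"
    by (simp add: divide_simps) (simp add: algebra_simps)
  have scale: "\<bar>x\<bar> * (N - 2) = \<bar>x * (N - 2)\<bar>" for x
    using assms(1) by (simp add: abs_mult)
  have "\<bar>M / N\<bar> \<le> 1"
    using assms(1,2) by simp
  then show ?thesis
    unfolding scale expand using assms(3) by linarith
qed

lemma not_independent_imp_large_fourier_coeff:
  assumes "\<forall>x\<in>cube n. \<bar>g x\<bar> \<le> 1" "s \<in> cube n" "s \<noteq> replicate n False"
    and "\<not> xi_independent n e (negpar n s) g"
  shows "e * (2 ^ n - 2) - 4 < \<bar>fourier_coeff n g s\<bar>"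
proof (cases "n = 1")
  case False
  with assms(2,3) have "2 \<le> n"
    by (cases n) (auto simp: cube_def)
  then have N: "(2::real) < 2 ^ n"
    using power_strict_increasing[of 1 n "2::real"] by simp
  define M where "M = (\<Sum>x\<in>cube n. g x)"
  define a where "a = avg (Sf n (negpar n s)) g - M / 2 ^ n"
  have "\<bar>M\<bar> \<le> (\<Sum>x\<in>cube n. \<bar>g x\<bar>)"
    unfolding M_def by (rule sum_abs)
  also have "\<dots> \<le> (\<Sum>x\<in>cube n. 1)"
    using assms(1) by (intro sum_mono) simp
  finally have "\<bar>M\<bar> \<le> 2 ^ n"
    by (simp add: card_cube)
  then have "\<bar>a\<bar> * (2 ^ n - 2) \<le> \<bar>fourier_coeff n g s\<bar> + 4"
    using deviation_bound[OF N] assms(1)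
    by (simp add: a_def M_def avg_Sf_negpar[OF assms(2,3)])
  moreover have "e < \<bar>a\<bar>"
    using assms(4) by (simp add: xi_independent_def avg_def card_cube a_def M_def)
  then have "e * (2 ^ n - 2) < \<bar>a\<bar> * (2 ^ n - 2)"
    using N by (simp add: mult_strict_right_mono)
  ultimately show ?thesis
    by linarith
qed simp \<comment> \<open>for n = 1 the threshold is -4\<close>

lemma card_abs_gt_le_sum_squares:
  fixes h :: "'a \<Rightarrow> real"
  assumes "finite A" "0 < t"
  shows "real (card {s \<in> A. t < \<bar>h s\<bar>}) \<le> (\<Sum>s\<in>A. (h s)\<^sup>2) / t\<^sup>2"
proof -
  have "real (card {s \<in> A. t < \<bar>h s\<bar>}) * t\<^sup>2 = (\<Sum>s\<in>{s \<in> A. t < \<bar>h s\<bar>}. t\<^sup>2)"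
    by simp
  also have "\<dots> \<le> (\<Sum>s\<in>{s \<in> A. t < \<bar>h s\<bar>}. (h s)\<^sup>2)"
    using assms(2) by (intro sum_mono) (simp add: abs_le_square_iff[symmetric])
  also have "\<dots> \<le> (\<Sum>s\<in>A. (h s)\<^sup>2)"
    using assms(1) by (intro sum_mono2) auto
  finally show ?thesis
    using assms(2) by (simp add: pos_le_divide_eq)
qed

lemma card_not_independent_le:
  assumes "\<forall>x\<in>cube n. \<bar>g x\<bar> \<le> 1" "0 < e * (2 ^ n - 2) - 4"
  shows "real (card {f \<in> Cn n. \<not> xi_independent n e f g}) \<le> 4 ^ n / (e * (2 ^ n - 2) - 4)\<^sup>2 + 1"
proof -
  define T where "T = e * (2 ^ n - 2) - 4"
  define B where "B = {s \<in> cube n. T < \<bar>fourier_coeff n g s\<bar>}"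
  have "{f \<in> Cn n. \<not> xi_independent n e f g} \<subseteq> negpar n ` insert (replicate n False) B"
    using not_independent_imp_large_fourier_coeff[OF assms(1)] by (auto simp: Cn_def B_def T_def)
  then have "card {f \<in> Cn n. \<not> xi_independent n e f g} \<le> card (negpar n ` insert (replicate n False) B)"
    by (rule card_mono[rotated]) (simp add: B_def)
  also have "\<dots> \<le> card (insert (replicate n False) B)"
    by (rule card_image_le) (simp add: B_def)
  also have "\<dots> \<le> card B + 1"
    by (simp add: card_insert_if B_def)
  finally have card_le: "real (card {f \<in> Cn n. \<not> xi_independent n e f g}) \<le> real (card B) + 1"
    by linarith
  have "(\<Sum>x\<in>cube n. (g x)\<^sup>2) \<le> (\<Sum>x\<in>cube n. 1)"
    using assms(1) by (intro sum_mono) (simp add: abs_square_le_1)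
  then have "(\<Sum>s\<in>cube n. (fourier_coeff n g s)\<^sup>2) \<le> 2 ^ n * 2 ^ n"
    by (simp add: parseval card_cube)
  also have "\<dots> = 4 ^ n"
    by (simp flip: power_mult_distrib)
  finally have sum_squares_le: "(\<Sum>s\<in>cube n. (fourier_coeff n g s)\<^sup>2) \<le> 4 ^ n" .
  have "real (card B) \<le> (\<Sum>s\<in>cube n. (fourier_coeff n g s)\<^sup>2) / T\<^sup>2"
    unfolding B_def using assms(2) by (intro card_abs_gt_le_sum_squares) (simp_all add: T_def)
  also have "\<dots> \<le> 4 ^ n / T\<^sup>2"
    using sum_squares_le by (rule divide_right_mono) simp
  finally show ?thesis
    using card_le by (simp add: T_def)
qed

lemma cubic_threshold_bounds:
  fixes q :: real
  assumes "0 < q" "32 \<le> q ^ 4"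
  shows "0 < q ^ 3 - 2 / q - 4" and "q ^ 8 / (q ^ 3 - 2 / q - 4)\<^sup>2 + 1 \<le> 4 * q\<^sup>2"
proof -
  have "2.37 \<le> q"
  proof (rule ccontr)
    assume "\<not> 2.37 \<le> q"
    then have "q ^ 4 < 2.37 ^ 4"
      using assms(1) by (intro power_strict_mono) auto
    then show False
      using assms(2) by (simp add: power_divide)
  qed
  then have "2.37\<^sup>2 \<le> q\<^sup>2" "2.37 ^ 3 \<le> q ^ 3"
    by (intro power_mono; simp)+
  then have q2: "5.6 \<le> q\<^sup>2" and q3: "13.3 \<le> q ^ 3"
    by (simp_all add: power_divide)
  have "2 / q \<le> 1"
    using \<open>2.37 \<le> q\<close> by simp
  then have T: "3 / 5 * q ^ 3 \<le> q ^ 3 - 2 / q - 4"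
    using q3 by linarith
  then show T_pos: "0 < q ^ 3 - 2 / q - 4"
    using q3 by linarith
  have "(3 / 5 * q ^ 3)\<^sup>2 \<le> (q ^ 3 - 2 / q - 4)\<^sup>2"
    using T q3 assms(1) by (intro power_mono) auto
  then have "q ^ 8 / (q ^ 3 - 2 / q - 4)\<^sup>2 \<le> q ^ 8 / (3 / 5 * q ^ 3)\<^sup>2"
    using assms(1) T_pos by (intro divide_left_mono) auto
  also have "\<dots> = 25 / 9 * q\<^sup>2"
    using assms(1) by (simp add: field_simps flip: power_add power_mult)
  finally show "q ^ 8 / (q ^ 3 - 2 / q - 4)\<^sup>2 + 1 \<le> 4 * q\<^sup>2"
    using q2 by linarith
qed

lemma threshold_bounds:
  assumes "5 \<le> n"
  shows "0 < 2 powr (- real n / 4) * (2 ^ n - 2) - 4"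
    and "4 ^ n / (2 powr (- real n / 4) * (2 ^ n - 2) - 4)\<^sup>2 + 1 \<le> 2 powr (real n / 2 + 2)"
proof -
  define q where "q = 2 powr (real n / 4)"
  have q_pow: "q ^ k = 2 powr (real k * real n / 4)" for k
    by (simp add: q_def powr_power)
  have q_pos: "0 < q"
    by (simp add: q_def)
  have q4: "q ^ 4 = 2 ^ n"
    by (simp add: q_pow powr_realpow)
  have "(2::real) ^ 5 \<le> 2 ^ n"
    using assms by (intro power_increasing) auto
  then have "32 \<le> q ^ 4"
    by (simp add: q4)
  note bounds = cubic_threshold_bounds[OF q_pos this]
  have "2 powr (- real n / 4) * (2 ^ n - 2) - 4 = q ^ 3 - 2 / q - 4"
    using q_pos by (simp add: q_def[symmetric] powr_minus_divide field_simps power_Suc[symmetric] flip: q4)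
  moreover have "4 ^ n = (q ^ 4)\<^sup>2"
    unfolding q4 by (simp add: power2_eq_square flip: power_mult_distrib)
  moreover have "2 powr (real n / 2 + 2) = 4 * q\<^sup>2"
    by (simp add: q_pow powr_add)
  ultimately show "0 < 2 powr (- real n / 4) * (2 ^ n - 2) - 4"
    and "4 ^ n / (2 powr (- real n / 4) * (2 ^ n - 2) - 4)\<^sup>2 + 1 \<le> 2 powr (real n / 2 + 2)"
    using bounds by (simp_all flip: power_mult)
qed

theorem mainTheorem5:
  fixes n :: nat and g :: "bool list \<Rightarrow> real"
  assumes "\<forall>x\<in>cube n. g x = -1 \<or> g x = 1"
  shows "real (card {f \<in> Cn n. \<not> xi_independent n (2 powr (- real n / 4)) f g})
           \<le> 2 powr (real n / 2 + 2)"
proof (cases "n \<le> 4")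
  case True
  have "card {f \<in> Cn n. \<not> xi_independent n (2 powr (- real n / 4)) f g} \<le> card (Cn n)"
    by (rule card_mono) (auto simp: Cn_def)
  also have "\<dots> \<le> card (cube n)"
    unfolding Cn_def by (rule card_image_le) simp
  finally have "real (card {f \<in> Cn n. \<not> xi_independent n (2 powr (- real n / 4)) f g}) \<le> 2 powr real n"
    by (simp add: card_cube powr_realpow)
  also have "\<dots> \<le> 2 powr (real n / 2 + 2)"
    using True by (intro powr_mono) auto
  finally show ?thesis .
next
  case False
  then have "5 \<le> n"
    by simp
  have "\<forall>x\<in>cube n. \<bar>g x\<bar> \<le> 1"
    using assms by auto
  from card_not_independent_le[OF this threshold_bounds(1)[OF \<open>5 \<le> n\<close>]] show ?thesis
    using threshold_bounds(2)[OF \<open>5 \<le> n\<close>] by linarith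
qed

end
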